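(* Let $(x_n)$ be a nonincreasing interval-filling sequence of positive reals with cardinal function $f$ such that the strict inequality $r_k>x_k$ holds for exactly one index $k\in\mathbb{N}$. Then $\mathrm{rng}(f)$ equals either $\{1,2,3\}$ or $\{1,2,3,4\}$.
   Context: For a summable sequence $\mathbf{x}=(x_n)$ of positive reals, $\mathcal{A}(\mathbf{x})=\{\sum_{n\in A}x_n: A\subseteq\mathbb{N}\}$ is its achievement set and its cardinal function $f$ assigns to $x\in\mathcal{A}(\mathbf{x})$ the cardinality (a positive integer, $\omega$, or $\mathfrak{c}$) of $\{(\varepsilon_n)\in\{0,1\}^{\mathbb{N}}:\sum\varepsilon_nx_n=x\}$. The sequence is interval-filling if $\mathcal{A}(\mathbf{x})$ is an interval (equivalently $x_n\le r_n$ for all $n$). The tail sums are $r_n=\sum_{k=n+1}^\infty x_k$. *)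

theory Defs
  imports "HOL-Analysis.Analysis" "HOL-Library.Extended_Nat"
begin

definition achievement_set :: "(nat \<Rightarrow> real) \<Rightarrow> real set" where
  "achievement_set x = {s. \<exists>A :: nat set. (\<lambda>n. if n \<in> A then x n else 0) sums s}"

definition representations :: "(nat \<Rightarrow> real) \<Rightarrow> real \<Rightarrow> (nat \<Rightarrow> bool) set" where
  "representations x y = {e. (\<lambda>n. if e n then x n else 0) sums y}"

text \<open>Cardinal function; finite cardinalities are exact, any infinite
  cardinality (omega or continuum) is recorded as infinity.\<close>
definition cardinal_function :: "(nat \<Rightarrow> real) \<Rightarrow> real \<Rightarrow> enat" where
  "cardinal_function x y =
     (if finite (representations x y) then enat (card (representations x y)) else \<infinity>)"

definition tail_sum :: "(nat \<Rightarrow> real) \<Rightarrow> nat \<Rightarrow> real" where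
  "tail_sum x n = (\<Sum>k. x (k + n + 1))"

definition interval_filling :: "(nat \<Rightarrow> real) \<Rightarrow> bool" where
  "interval_filling x \<longleftrightarrow> is_interval (achievement_set x)"

end

theory Submission
  imports Defs
begin

text \<open>Interval filling forces \<open>x n \<le> r n\<close>, so \<open>x n = r n\<close> for \<open>n \<noteq> k\<close>, and the tail after
  \<open>k\<close> is \<open>c / 2^m\<close> with \<open>c = x (k+1)\<close>. That tail represents every point of \<open>[0, 2c]\<close> once,
  except the dyadic multiples of \<open>c\<close> in \<open>(0, 2c)\<close>, which it represents twice. Splitting on
  whether \<open>a = x k\<close> is used, the sequence from \<open>k\<close> on represents \<open>y\<close> in \<open>g y + g (y - a)\<close>
  ways, \<open>g\<close> counting the representations by the tail; since \<open>0 < a < 2c\<close> this takes the values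
  \<open>1, 2, 3\<close>, and also \<open>4\<close> exactly when \<open>a\<close> is a dyadic multiple of \<open>c\<close>. Prepending a term
  \<open>x n = r n\<close> only adds the value \<open>2\<close>, at \<open>y = x n\<close>, which is already present.\<close>

lemma mem_representations_iff:
  "e \<in> representations z y \<longleftrightarrow> (\<lambda>n. if e n then z n else 0) sums y"
  by (simp add: representations_def)

lemma achievement_set_eq: "achievement_set z = {y. representations z y \<noteq> {}}"
proof (intro set_eqI iffI)
  fix y assume "y \<in> achievement_set z"
  then obtain A where "(\<lambda>n. if n \<in> A then z n else 0) sums y"
    by (auto simp: achievement_set_def)
  hence "(\<lambda>n. n \<in> A) \<in> representations z y" by (simp add: mem_representations_iff)
  thus "y \<in> {y. representations z y \<noteq> {}}" by blast
next
  fix y assume "y \<in> {y. representations z y \<noteq> {}}"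
  then obtain e where "e \<in> representations z y" by blast
  hence "(\<lambda>n. if n \<in> Collect e then z n else 0) sums y" by (simp add: mem_representations_iff)
  thus "y \<in> achievement_set z" unfolding achievement_set_def by blast
qed

subsection \<open>Splitting off the first term\<close>

lemma representations_Suc_split:
  "representations z y = case_nat False ` representations (\<lambda>n. z (Suc n)) y
     \<union> case_nat True ` representations (\<lambda>n. z (Suc n)) (y - z 0)"
proof (intro equalityI subsetI)
  fix e assume "e \<in> representations z y"
  hence "(\<lambda>n. if e (Suc n) then z (Suc n) else 0) sums (y - (if e 0 then z 0 else 0))"
    using sums_Suc_iff[of "\<lambda>n. if e n then z n else 0"] by (simp add: mem_representations_iff)
  hence "(\<lambda>n. e (Suc n)) \<in> representations (\<lambda>n. z (Suc n)) (y - (if e 0 then z 0 else 0))"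
    by (simp add: mem_representations_iff)
  moreover have "e = case_nat (e 0) (\<lambda>n. e (Suc n))"
    by (auto simp: fun_eq_iff split: nat.split)
  ultimately have "e \<in> case_nat (e 0) ` representations (\<lambda>n. z (Suc n)) (y - (if e 0 then z 0 else 0))"
    by (rule image_eqI[where f="case_nat (e 0)", rotated])
  thus "e \<in> case_nat False ` representations (\<lambda>n. z (Suc n)) y
     \<union> case_nat True ` representations (\<lambda>n. z (Suc n)) (y - z 0)"
    by (cases "e 0") simp_all
next
  fix e assume "e \<in> case_nat False ` representations (\<lambda>n. z (Suc n)) y
     \<union> case_nat True ` representations (\<lambda>n. z (Suc n)) (y - z 0)"
  then obtain b e' where e: "e = case_nat b e'"
    and "(\<lambda>n. if e' n then z (Suc n) else 0) sums (if b then y - z 0 else y)"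
    by (auto simp: mem_representations_iff)
  hence "(\<lambda>n. (\<lambda>m. if e m then z m else 0) (Suc n)) sums (y - (if e 0 then z 0 else 0))"
    by (cases b) simp_all
  hence "(\<lambda>m. if e m then z m else 0) sums (y - (if e 0 then z 0 else 0) + (if e 0 then z 0 else 0))"
    by (rule sums_Suc_iff[THEN iffD1])
  thus "e \<in> representations z y"
    by (simp add: mem_representations_iff)
qed

lemma
  assumes "\<And>y. finite (representations (\<lambda>n. z (Suc n)) y)"
  shows finite_representations_SucI: "finite (representations z y)"
    and card_representations_Suc: "card (representations z y) =
      card (representations (\<lambda>n. z (Suc n)) y) + card (representations (\<lambda>n. z (Suc n)) (y - z 0))"
proof -
  have "case_nat False e \<noteq> case_nat True e'" for e e'
    by (metis nat.case(1))
  hence disj: "case_nat False ` A \<inter> case_nat True ` B = {}" for A B :: "(nat \<Rightarrow> bool) set"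
    by blast
  have "e = e'" if "case_nat b e = case_nat b e'" for b :: bool and e e' :: "nat \<Rightarrow> bool"
    using fun_cong[OF that, of "Suc _"] by auto
  hence inj: "inj_on (case_nat b) A" for b and A :: "(nat \<Rightarrow> bool) set"
    by (meson inj_onI)
  show "finite (representations z y)"
    using assms by (simp add: representations_Suc_split[of z y])
  show "card (representations z y) = card (representations (\<lambda>n. z (Suc n)) y)
      + card (representations (\<lambda>n. z (Suc n)) (y - z 0))"
  proof -
    have "card (representations z y) = card (case_nat False ` representations (\<lambda>n. z (Suc n)) y)
        + card (case_nat True ` representations (\<lambda>n. z (Suc n)) (y - z 0))"
      unfolding representations_Suc_split[of z y] using assms disj by (intro card_Un_disjoint) simp_all
    thus ?thesis using inj by (simp add: card_image)
  qed
qed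

lemma finite_representations_shiftI:
  assumes "\<And>y. finite (representations (\<lambda>m. z (m + N)) y)"
  shows "finite (representations z y)"
  using assms
proof (induction N arbitrary: z y)
  case (Suc N)
  have "finite (representations (\<lambda>n. z (Suc n)) y)" for y
    by (rule Suc.IH) (use Suc.prems in simp)
  thus ?case by (rule finite_representations_SucI)
qed simp

context
  fixes z :: "nat \<Rightarrow> real"
  assumes pos: "\<And>n. 0 < z n" and summ: "summable z"
begin

lemma representations_nonempty_bounds:
  assumes "representations z y \<noteq> {}"
  shows "0 \<le> y" "y \<le> suminf z"
proof -
  from assms obtain e where S: "(\<lambda>n. if e n then z n else 0) sums y"
    by (auto simp: mem_representations_iff)
  show "0 \<le> y" by (rule sums_le[OF _ sums_zero S]) (simp add: less_imp_le pos)
  show "y \<le> suminf z" by (rule sums_le[OF _ S summable_sums[OF summ]]) (simp add: less_imp_le pos)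
qed

lemma representations_zero: "representations z 0 = {\<lambda>_. False}"
proof (intro equalityI subsetI)
  fix e assume "e \<in> representations z 0"
  hence "\<forall>n. (if e n then z n else 0) = 0"
    using suminf_eq_zero_iff[of "\<lambda>n. if e n then z n else 0"]
    by (simp add: mem_representations_iff sums_iff less_imp_le pos)
  thus "e \<in> {\<lambda>_. False}" using pos by (auto simp: fun_eq_iff) (metis less_irrefl)
qed (simp add: mem_representations_iff)

lemma representations_suminf: "representations z (suminf z) = {\<lambda>_. True}"
proof (intro equalityI subsetI)
  fix e assume "e \<in> representations z (suminf z)"
  hence "(\<lambda>n. z n - (if e n then z n else 0)) sums 0"
    using sums_diff[OF summable_sums[OF summ]] by (fastforce simp: mem_representations_iff)
  hence "\<forall>n. z n - (if e n then z n else 0) = 0"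
    using suminf_eq_zero_iff[of "\<lambda>n. z n - (if e n then z n else 0)"]
    by (simp add: sums_iff less_imp_le pos)
  thus "e \<in> {\<lambda>_. True}" using pos by (auto simp: fun_eq_iff) (metis diff_zero less_irrefl)
qed (simp add: mem_representations_iff summable_sums[OF summ])

end

definition representation_counts :: "(nat \<Rightarrow> real) \<Rightarrow> nat set" where
  "representation_counts z = (\<lambda>y. card (representations z y)) ` UNIV - {0}"

lemma representation_countsI:
  "card (representations z y) = v \<Longrightarrow> v \<noteq> 0 \<Longrightarrow> v \<in> representation_counts z"
  unfolding representation_counts_def by blast

lemma cardinal_function_image_achievement_set:
  assumes "\<And>y. finite (representations z y)"
  shows "cardinal_function z ` achievement_set z = enat ` representation_counts z"
proof -
  have "cardinal_function z ` achievement_set z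
      = (\<lambda>y. enat (card (representations z y))) ` {y. card (representations z y) \<noteq> 0}"
    using assms by (auto simp: achievement_set_eq cardinal_function_def intro!: image_cong)
  also have "\<dots> = enat ` representation_counts z"
    by (auto simp: representation_counts_def)
  finally show ?thesis .
qed

text \<open>Prepending a term equal to the sum of all later terms: the two shifted copies of the
  support \<open>[0, z 0]\<close> of the tail overlap only at \<open>y = z 0\<close>, where \<open>1 + 1\<close> representations
  meet.\<close>

lemma representation_counts_prepend_tail_sum:
  assumes pos: "\<And>n. 0 < z n" and summ: "summable z"
    and exact: "z 0 = (\<Sum>n. z (Suc n))"
    and fin: "\<And>y. finite (representations (\<lambda>n. z (Suc n)) y)"
  shows "representation_counts z = insert 2 (representation_counts (\<lambda>n. z (Suc n)))"
proof -
  define R where "R y = card (representations (\<lambda>n. z (Suc n)) y)" for y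
  have summ': "summable (\<lambda>n. z (Suc n))" using summ by (simp add: summable_Suc_iff)
  have split: "card (representations z y) = R y + R (y - z 0)" for y
    unfolding R_def by (rule card_representations_Suc[OF fin])
  have R0: "R 0 = 1" and Rtop: "R (z 0) = 1"
    using representations_zero[OF pos summ'] representations_suminf[OF pos summ']
    by (simp_all add: R_def exact)
  have Rsupp: "0 \<le> y \<and> y \<le> z 0" if "R y \<noteq> 0" for y
  proof -
    have "representations (\<lambda>n. z (Suc n)) y \<noteq> {}" using that by (auto simp: R_def)
    thus ?thesis using representations_nonempty_bounds[OF pos summ'] by (simp add: exact)
  qed
  have counts_sub: "card (representations z y) \<in> insert 2 (representation_counts (\<lambda>n. z (Suc n)))"
    if "card (representations z y) \<noteq> 0" for y
  proof (cases "R y = 0 \<or> R (y - z 0) = 0")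
    case True
    hence "card (representations z y) = R y \<or> card (representations z y) = R (y - z 0)"
      using split[of y] by auto
    thus ?thesis using that unfolding R_def by (auto intro: representation_countsI)
  next
    case False
    hence "y = z 0" using Rsupp[of y] Rsupp[of "y - z 0"] by simp
    thus ?thesis using split[of y] R0 Rtop by simp
  qed
  have tail_counts: "R y \<in> representation_counts z" if "R y \<noteq> 0" for y
  proof (cases "y = 0")
    case True
    have "R (- z 0) = 0" using Rsupp[of "- z 0"] pos[of 0] by fastforce
    hence "card (representations z 0) = R y" using split[of 0] R0 True by simp
    thus ?thesis using that by (rule representation_countsI)
  next
    case False
    have "R (y + z 0) = 0" using Rsupp[of y] Rsupp[of "y + z 0"] that False by fastforce
    hence "card (representations z (y + z 0)) = R y" using split[of "y + z 0"] by simp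
    thus ?thesis using that by (rule representation_countsI)
  qed
  have "2 \<in> representation_counts z"
    using split[of "z 0"] R0 Rtop by (intro representation_countsI[of z "z 0"]) simp_all
  moreover have "representation_counts z \<subseteq> insert 2 (representation_counts (\<lambda>n. z (Suc n)))"
    using counts_sub unfolding representation_counts_def by blast
  moreover have "representation_counts (\<lambda>n. z (Suc n)) \<subseteq> representation_counts z"
    using tail_counts unfolding representation_counts_def R_def by blast
  ultimately show ?thesis by blast
qed

subsection \<open>The halving sequence\<close>

definition halving :: "real \<Rightarrow> nat \<Rightarrow> real" where
  "halving c n = c / 2 ^ n"

lemma halving_sums: "halving c sums (2 * c)"
proof -
  have "(\<lambda>n. c * (1 / 2) ^ n) sums (c * (1 / (1 - 1 / 2)))"
    by (intro sums_mult geometric_sums) simp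
  thus ?thesis by (simp add: halving_def[abs_def] power_one_over mult.commute)
qed

lemma halving_tail_sums: "(\<lambda>i. halving c (i + Suc m)) sums halving c m"
proof -
  have "(\<lambda>i. halving c (i + Suc m)) = halving (c / 2 ^ Suc m)"
    by (simp add: halving_def fun_eq_iff power_add)
  thus ?thesis using halving_sums[of "c / 2 ^ Suc m"] by (simp add: halving_def)
qed

definition dyadic_multiples :: "real \<Rightarrow> real set" where
  "dyadic_multiples c = {c * of_int i / 2 ^ j | (i :: int) (j :: nat). True}"

lemma dyadic_multiples_add:
  assumes "y \<in> dyadic_multiples c" "y' \<in> dyadic_multiples c"
  shows "y + y' \<in> dyadic_multiples c"
proof -
  from assms obtain i j i' j' where y: "y = c * of_int i / 2 ^ j" and y': "y' = c * of_int i' / 2 ^ j'"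
    by (auto simp: dyadic_multiples_def)
  have "y + y' = c * of_int (i * 2 ^ j' + i' * 2 ^ j) / 2 ^ (j + j')"
    unfolding y y' by (simp add: power_add field_simps)
  thus ?thesis unfolding dyadic_multiples_def by blast
qed

lemma dyadic_multiples_diff:
  assumes "y \<in> dyadic_multiples c" "y' \<in> dyadic_multiples c"
  shows "y - y' \<in> dyadic_multiples c"
proof -
  from assms obtain i j i' j' where y: "y = c * of_int i / 2 ^ j" and y': "y' = c * of_int i' / 2 ^ j'"
    by (auto simp: dyadic_multiples_def)
  have "y - y' = c * of_int (i * 2 ^ j' - i' * 2 ^ j) / 2 ^ (j + j')"
    unfolding y y' by (simp add: power_add field_simps)
  thus ?thesis unfolding dyadic_multiples_def by blast
qed

lemma halving_in_dyadic_multiples: "halving c n \<in> dyadic_multiples c"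
  unfolding dyadic_multiples_def halving_def by (rule CollectI, rule exI[of _ 1], rule exI[of _ n]) simp

lemma zero_in_dyadic_multiples: "0 \<in> dyadic_multiples c"
  unfolding dyadic_multiples_def by (rule CollectI, rule exI[of _ 0], rule exI[of _ 0]) simp

lemma finite_support_representation_dyadic:
  assumes "e \<in> representations (halving c) y" and "\<forall>n\<ge>N. \<not> e n"
  shows "y \<in> dyadic_multiples c"
proof -
  have "(\<lambda>n. if e n then halving c n else 0) sums (\<Sum>n<N. if e n then halving c n else 0)"
    by (rule sums_finite) (use assms(2) in auto)
  hence "y = (\<Sum>n<N. if e n then halving c n else 0)"
    using assms(1) by (simp add: mem_representations_iff sums_unique2)
  moreover have "(\<Sum>n<M. if e n then halving c n else 0) \<in> dyadic_multiples c" for M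
    by (induction M)
      (auto simp: zero_in_dyadic_multiples halving_in_dyadic_multiples intro: dyadic_multiples_add)
  ultimately show ?thesis by simp
qed

lemma floor_double_eq: "\<lfloor>2 * u\<rfloor> = 2 * \<lfloor>u\<rfloor> + (if odd \<lfloor>2 * u\<rfloor> then 1 else 0)" for u :: real
proof -
  have "2 * \<lfloor>u\<rfloor> \<le> \<lfloor>2 * u\<rfloor>" unfolding le_floor_iff by simp
  moreover have "\<lfloor>2 * u\<rfloor> < 2 * \<lfloor>u\<rfloor> + 2"
    unfolding floor_less_iff using real_of_int_floor_add_one_gt[of u] by linarith
  ultimately show ?thesis by presburger
qed

text \<open>For \<open>u \<in> [0, 2)\<close> the digit \<open>0\<close> is the units digit.\<close>

definition binary_digit :: "real \<Rightarrow> nat \<Rightarrow> bool" where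
  "binary_digit u n = odd \<lfloor>u * 2 ^ n\<rfloor>"

lemma sum_halving_binary_digits:
  fixes u c :: real
  assumes "0 \<le> u" "u < 2"
  shows "(\<Sum>n<Suc N. if binary_digit u n then halving c n else 0) = c * \<lfloor>u * 2 ^ N\<rfloor> / 2 ^ N"
proof (induction N)
  case 0
  have "0 \<le> \<lfloor>u\<rfloor>" "\<lfloor>u\<rfloor> < 2" using assms by (simp_all add: floor_less_iff)
  hence "\<lfloor>u\<rfloor> = 0 \<or> \<lfloor>u\<rfloor> = 1" by linarith
  thus ?case by (auto simp: halving_def binary_digit_def)
next
  case (Suc N)
  have double: "\<lfloor>u * 2 ^ Suc N\<rfloor> = 2 * \<lfloor>u * 2 ^ N\<rfloor> + (if binary_digit u (Suc N) then 1 else 0)"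
    using floor_double_eq[of "u * 2 ^ N"] by (simp add: binary_digit_def mult.commute mult.left_commute)
  have "(\<Sum>n<Suc (Suc N). if binary_digit u n then halving c n else 0)
      = c * \<lfloor>u * 2 ^ N\<rfloor> / 2 ^ N + (if binary_digit u (Suc N) then halving c (Suc N) else 0)"
    using Suc.IH by simp
  also have "\<dots> = c * \<lfloor>u * 2 ^ Suc N\<rfloor> / 2 ^ Suc N"
    unfolding double by (simp add: halving_def field_simps)
  finally show ?case .
qed

context
  fixes c :: real
  assumes c_pos: "0 < c"
begin

lemma halving_pos: "0 < halving c n"
  using c_pos by (simp add: halving_def)

text \<open>After the first difference the tail of \<open>e'\<close> must exceed that of \<open>e\<close> by
  \<open>c / 2^m\<close>, the sum of all later terms, so \<open>e'\<close> uses all of them and \<open>e\<close> none.\<close>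

lemma representations_halving_first_difference:
  assumes "e \<in> representations (halving c) y" "e' \<in> representations (halving c) y"
    and "\<forall>n<m. e n = e' n" "e m" "\<not> e' m"
  shows "\<forall>n>m. \<not> e n \<and> e' n"
proof -
  define d where "d n = (if e n then halving c n else 0) - (if e' n then halving c n else 0)" for n
  have "d sums 0"
    unfolding d_def using sums_diff assms(1,2) by (fastforce simp: mem_representations_iff)
  moreover have "(\<Sum>i<Suc m. d i) = halving c m"
    using assms(3-5) by (simp add: d_def)
  ultimately have d_tail: "(\<lambda>i. d (i + Suc m)) sums (- halving c m)"
    using sums_iff_shift[of d "Suc m"] by simp
  have "(\<lambda>i. halving c (i + Suc m) + d (i + Suc m)) sums 0"
    using sums_add[OF halving_tail_sums[of c m] d_tail] by simp
  moreover have "0 \<le> halving c (i + Suc m) + d (i + Suc m)" for i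
    using halving_pos by (simp add: d_def less_imp_le)
  ultimately have zero: "halving c (i + Suc m) + d (i + Suc m) = 0" for i
    using suminf_eq_zero_iff by (fastforce simp: sums_iff)
  show ?thesis
  proof (intro allI impI)
    fix n assume "m < n"
    hence "halving c n + d n = 0" using zero[of "n - Suc m"] by simp
    thus "\<not> e n \<and> e' n" using halving_pos[of n] by (auto simp: d_def split: if_splits)
  qed
qed

lemma representations_halving_differ:
  assumes "e \<in> representations (halving c) y" "e' \<in> representations (halving c) y" "e \<noteq> e'"
  obtains m where "\<forall>n<m. e n = e' n" "e m \<noteq> e' m" "\<forall>n>m. e n = e' m \<and> e' n = e m"
proof -
  define m where "m = (LEAST n. e n \<noteq> e' n)"
  have "\<exists>n. e n \<noteq> e' n" using assms(3) by (auto simp: fun_eq_iff)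
  hence diff: "e m \<noteq> e' m" unfolding m_def by (rule LeastI_ex)
  have before: "\<forall>n<m. e n = e' n" unfolding m_def using not_less_Least by blast
  have "\<forall>n>m. e n = e' m \<and> e' n = e m"
  proof (cases "e m")
    case True
    have "\<forall>n>m. \<not> e n \<and> e' n"
      by (rule representations_halving_first_difference[OF assms(1,2) before True]) (use diff True in simp)
    thus ?thesis using True diff by simp
  next
    case False
    have "\<forall>n<m. e' n = e n" using before by simp
    hence "\<forall>n>m. \<not> e' n \<and> e n"
      by (rule representations_halving_first_difference[OF assms(2,1)]) (use diff False in simp_all)
    thus ?thesis using False diff by simp
  qed
  with before diff that show ?thesis by blast
qed

lemma representations_halving_at_most_two:
  assumes "e1 \<in> representations (halving c) y" "e2 \<in> representations (halving c) y"
    "e3 \<in> representations (halving c) y" "e1 \<noteq> e2" "e1 \<noteq> e3"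
  shows "e2 = e3"
proof -
  obtain m where m: "\<forall>n<m. e1 n = e2 n" "e1 m \<noteq> e2 m" "\<forall>n>m. e1 n = e2 m \<and> e2 n = e1 m"
    using representations_halving_differ[OF assms(1,2,4)] .
  obtain m' where m': "\<forall>n<m'. e1 n = e3 n" "e1 m' \<noteq> e3 m'" "\<forall>n>m'. e1 n = e3 m' \<and> e3 n = e1 m'"
    using representations_halving_differ[OF assms(1,3,5)] .
  have "m = m'"
  proof (rule ccontr)
    assume "m \<noteq> m'"
    then consider "m < m'" | "m' < m" by linarith
    thus False
    proof cases
      case 1
      hence "e1 m' = e2 m" "e1 (Suc m') = e2 m" using m(3) by auto
      moreover have "e1 (Suc m') = e3 m'" using m'(3) by simp
      ultimately show False using m'(2) by simp
    next
      case 2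
      hence "e1 m = e3 m'" "e1 (Suc m) = e3 m'" using m'(3) by auto
      moreover have "e1 (Suc m) = e2 m" using m(3) by simp
      ultimately show False using m(2) by simp
    qed
  qed
  show "e2 = e3"
  proof
    fix n show "e2 n = e3 n"
    proof (cases n m rule: linorder_cases)
      case less thus ?thesis using m(1) m'(1) \<open>m = m'\<close> by auto
    next
      case equal thus ?thesis using m(2) m'(2) \<open>m = m'\<close> by auto
    next
      case greater thus ?thesis using m(3) m'(3) \<open>m = m'\<close> by auto
    qed
  qed
qed

lemma
  shows finite_representations_halving: "finite (representations (halving c) y)"
    and card_representations_halving_le: "card (representations (halving c) y) \<le> 2"
proof -
  have "\<exists>A. representations (halving c) y \<subseteq> A \<and> finite A \<and> card A \<le> 2"
  proof (cases "representations (halving c) y = {}")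
    case False
    then obtain e1 where e1: "e1 \<in> representations (halving c) y" by blast
    define e2 where "e2 = (SOME e. e \<in> representations (halving c) y \<and> e \<noteq> e1)"
    have "representations (halving c) y \<subseteq> {e1, e2}"
    proof
      fix e assume e: "e \<in> representations (halving c) y"
      show "e \<in> {e1, e2}"
      proof (cases "e = e1")
        case False
        with e have "\<exists>e'. e' \<in> representations (halving c) y \<and> e' \<noteq> e1" by blast
        hence "e2 \<in> representations (halving c) y \<and> e2 \<noteq> e1"
          unfolding e2_def by (rule someI_ex)
        thus ?thesis using representations_halving_at_most_two[OF e _ e1] False by blast
      qed simp
    qed
    thus ?thesis by (intro exI[of _ "{e1, e2}"]) (auto simp: card_insert_if)
  qed (intro exI[of _ "{}"], simp)
  thus "finite (representations (halving c) y)" "card (representations (halving c) y) \<le> 2"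
    by (meson card_mono finite_subset le_trans)+
qed

lemma binary_digits_representation:
  assumes "0 \<le> u" "u < 2"
  shows "binary_digit u \<in> representations (halving c) (c * u)"
proof -
  have lower: "c * u - c / 2 ^ N \<le> c * \<lfloor>u * 2 ^ N\<rfloor> / 2 ^ N" for N
  proof -
    have "c * (u * 2 ^ N - 1) \<le> c * of_int \<lfloor>u * 2 ^ N\<rfloor>"
      using c_pos by (intro mult_left_mono) linarith+
    hence "c * (u * 2 ^ N - 1) / 2 ^ N \<le> c * of_int \<lfloor>u * 2 ^ N\<rfloor> / 2 ^ N"
      by (rule divide_right_mono) simp
    thus ?thesis by (simp add: field_simps)
  qed
  have upper: "c * \<lfloor>u * 2 ^ N\<rfloor> / 2 ^ N \<le> c * u" for N
  proof -
    have "c * of_int \<lfloor>u * 2 ^ N\<rfloor> \<le> c * (u * 2 ^ N)"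
      using c_pos by (intro mult_left_mono) simp_all
    thus ?thesis by (simp add: field_simps)
  qed
  have lower_lim: "(\<lambda>N. c * u - c / 2 ^ N) \<longlonglongrightarrow> c * u"
    using tendsto_diff[OF tendsto_const[of "c * u"] LIMSEQ_divide_realpow_zero[of 2 c]] by simp
  have "(\<lambda>N. c * \<lfloor>u * 2 ^ N\<rfloor> / 2 ^ N) \<longlonglongrightarrow> c * u"
    by (rule real_tendsto_sandwich[OF _ _ lower_lim tendsto_const]) (simp_all add: lower upper)
  hence "(\<lambda>N. \<Sum>n<Suc N. if binary_digit u n then halving c n else 0) \<longlonglongrightarrow> c * u"
    by (simp only: sum_halving_binary_digits[OF assms])
  hence "(\<lambda>N. \<Sum>n<N. if binary_digit u n then halving c n else 0) \<longlonglongrightarrow> c * u"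
    by (rule LIMSEQ_imp_Suc)
  thus ?thesis by (simp add: mem_representations_iff sums_def)
qed

lemma dyadic_finite_support_representation:
  assumes "y \<in> dyadic_multiples c" "0 \<le> y" "y < 2 * c"
  obtains e N where "e \<in> representations (halving c) y" "\<forall>n\<ge>N. \<not> e n"
proof -
  obtain i j where y: "y = c * (of_int i / 2 ^ j)"
    using assms(1) by (auto simp: dyadic_multiples_def)
  define u :: real where "u = of_int i / 2 ^ j"
  have u: "u = y / c" using y c_pos by (simp add: u_def)
  have "0 \<le> u" "u < 2"
    using assms(2,3) c_pos by (simp_all add: u divide_less_eq)
  hence "binary_digit u \<in> representations (halving c) (c * u)"
    by (rule binary_digits_representation)
  moreover have "c * u = y" using y by (simp add: u_def)
  moreover have "\<not> binary_digit u n" if "Suc j \<le> n" for n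
  proof -
    have "(2 :: real) ^ n = 2 ^ j * 2 ^ (n - j)" using that by (simp flip: power_add)
    hence "u * 2 ^ n = of_int (i * 2 ^ (n - j))" by (simp add: u_def)
    hence "\<lfloor>u * 2 ^ n\<rfloor> = i * 2 ^ (n - j)" by (simp only: floor_of_int)
    thus ?thesis using that by (simp add: binary_digit_def)
  qed
  ultimately show ?thesis using that by blast
qed

text \<open>A representation ending in \<open>1 0 0 \<dots>\<close> has a partner ending in \<open>0 1 1 \<dots>\<close>.\<close>

lemma card_representations_halving_eq_2:
  assumes e: "e \<in> representations (halving c) y" and "\<forall>n\<ge>N. \<not> e n" and "\<exists>n. e n"
  shows "card (representations (halving c) y) = 2"
proof -
  have "{n. e n} \<subseteq> {..<N}" using assms(2) leI by blast
  hence fin: "finite {n. e n}" by (rule finite_subset) simp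
  define m where "m = Max {n. e n}"
  have em: "e m" using Max_in[OF fin] assms(3) by (auto simp: m_def)
  have after: "\<forall>n>m. \<not> e n" using Max_ge[OF fin] unfolding m_def by (meson leD mem_Collect_eq)
  define e' where "e' n = (n < m \<and> e n \<or> m < n)" for n
  define f where "f n = (if n = m then - halving c m else if m < n then halving c n else 0)" for n
  have "(\<lambda>i. f (i + Suc m)) sums halving c m"
    using halving_tail_sums by (simp add: f_def)
  moreover have "(\<Sum>i<Suc m. f i) = - halving c m"
    by (simp add: f_def)
  ultimately have "f sums 0"
    using sums_iff_shift[of f "Suc m"] by simp
  hence "(\<lambda>n. (if e n then halving c n else 0) + f n) sums (y + 0)"
    using sums_add e unfolding mem_representations_iff by blast
  moreover have "(\<lambda>n. (if e n then halving c n else 0) + f n) = (\<lambda>n. if e' n then halving c n else 0)"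
    using em after by (auto simp: fun_eq_iff e'_def f_def)
  ultimately have "e' \<in> representations (halving c) y"
    by (simp add: mem_representations_iff)
  moreover have "e \<noteq> e'" using em by (auto simp: fun_eq_iff e'_def)
  ultimately have "card {e, e'} \<le> card (representations (halving c) y)"
    using e finite_representations_halving by (intro card_mono) auto
  thus ?thesis using card_representations_halving_le[of y] \<open>e \<noteq> e'\<close> by simp
qed

lemma card_representations_halving_eq_2_imp_dyadic:
  assumes "card (representations (halving c) y) = 2"
  shows "y \<in> dyadic_multiples c"
proof -
  obtain e e' where ee: "representations (halving c) y = {e, e'}" "e \<noteq> e'"
    using assms card_2_iff[of "representations (halving c) y"] by blast
  then obtain m where m: "e m \<noteq> e' m" "\<forall>n>m. e n = e' m \<and> e' n = e m"
    by (metis insertI1 insertI2 representations_halving_differ)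
  show ?thesis
  proof (cases "e m")
    case True
    hence "\<forall>n\<ge>Suc m. \<not> e n" using m by auto
    with ee show ?thesis by (intro finite_support_representation_dyadic[where e=e and N="Suc m"]) auto
  next
    case False
    hence "\<forall>n\<ge>Suc m. \<not> e' n" using m by auto
    with ee show ?thesis by (intro finite_support_representation_dyadic[where e=e' and N="Suc m"]) auto
  qed
qed

lemma card_representations_halving:
  "card (representations (halving c) y) =
    (if y < 0 \<or> 2 * c < y then 0
     else if 0 < y \<and> y < 2 * c \<and> y \<in> dyadic_multiples c then 2 else 1)"
proof -
  have pos: "\<And>n. 0 < halving c n" by (rule halving_pos)
  have summ: "summable (halving c)" and sum_eq: "suminf (halving c) = 2 * c"
    using halving_sums by (auto simp: sums_iff)
  have nonempty: "representations (halving c) y \<noteq> {}" if "0 \<le> y" "y < 2 * c"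
    using binary_digits_representation[of "y / c"] that c_pos by (auto simp: field_simps)
  consider "y < 0 \<or> 2 * c < y" | "y = 0 \<or> y = 2 * c"
    | "0 < y" "y < 2 * c" "y \<in> dyadic_multiples c" | "0 < y" "y < 2 * c" "y \<notin> dyadic_multiples c"
    by linarith
  thus ?thesis
  proof cases
    case 1
    hence "representations (halving c) y = {}"
      using representations_nonempty_bounds[OF pos summ] sum_eq by force
    thus ?thesis using 1 by simp
  next
    case 2
    thus ?thesis
      using representations_zero[OF pos summ] representations_suminf[OF pos summ] sum_eq c_pos
      by auto
  next
    case 3
    then obtain e N where "e \<in> representations (halving c) y" "\<forall>n\<ge>N. \<not> e n"
      by (auto elim: dyadic_finite_support_representation)
    moreover have "\<exists>n. e n"
    proof (rule ccontr)
      assume "\<nexists>n. e n"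
      hence "(\<lambda>n. if e n then halving c n else 0) = (\<lambda>_. 0)" by auto
      with \<open>e \<in> _\<close> have "y = 0" by (simp add: mem_representations_iff sums_zero sums_unique2)
      with 3 show False by simp
    qed
    ultimately show ?thesis using 3 card_representations_halving_eq_2 by simp
  next
    case 4
    hence "card (representations (halving c) y) \<noteq> 0"
      using nonempty finite_representations_halving by simp
    moreover have "card (representations (halving c) y) \<noteq> 2"
      using 4 card_representations_halving_eq_2_imp_dyadic by blast
    ultimately show ?thesis using 4 card_representations_halving_le[of y] by simp
  qed
qed

end

lemma representation_counts_prepend_halving:
  assumes c_pos: "0 < c" and tail: "(\<lambda>n. z (Suc n)) = halving c"
    and a_pos: "0 < z 0" and a_less: "z 0 < 2 * c"
  shows "representation_counts z = (if z 0 \<in> dyadic_multiples c then {1, 2, 3, 4} else {1, 2, 3})"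
proof -
  define a where "a = z 0"
  define g where "g y = card (representations (halving c) y)" for y
  have g: "g y = (if y < 0 \<or> 2 * c < y then 0
      else if 0 < y \<and> y < 2 * c \<and> y \<in> dyadic_multiples c then 2 else 1)" for y
    unfolding g_def by (rule card_representations_halving[OF c_pos])
  have count: "card (representations z y) = g y + g (y - a)" for y
    using card_representations_Suc[of z y] finite_representations_halving[OF c_pos]
    by (simp add: tail g_def a_def)
  have "0 < min a (2 * c - a) / c" using a_pos a_less c_pos by (simp add: a_def)
  then obtain J where "(1 / 2) ^ J < min a (2 * c - a) / c"
    using real_arch_pow_inv[of _ "1 / 2 :: real"] by auto
  hence "c * (1 / 2) ^ J < min a (2 * c - a)" using c_pos by (simp add: field_simps)
  hence h: "halving c J < a" "halving c J < 2 * c - a"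
    by (simp_all add: halving_def power_one_over)
  have h_pos: "0 < halving c J" using halving_pos[OF c_pos] .
  have h_dyadic: "halving c J \<in> dyadic_multiples c" by (rule halving_in_dyadic_multiples)
  have a_dyadic_iff: "a + halving c J \<in> dyadic_multiples c \<longleftrightarrow> a \<in> dyadic_multiples c"
    using dyadic_multiples_add[OF _ h_dyadic] dyadic_multiples_diff[OF _ h_dyadic] by fastforce
  have one: "1 \<in> representation_counts z"
    using count[of 0] a_pos c_pos by (intro representation_countsI[of z 0]) (simp_all add: g a_def)
  have two: "2 \<in> representation_counts z"
    using count[of "halving c J"] h h_pos h_dyadic a_pos c_pos
    by (intro representation_countsI[of z "halving c J"]) (simp_all add: g)
  have three_or_four: "(if a \<in> dyadic_multiples c then 4 else 3) \<in> representation_counts z"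
    using count[of "a + halving c J"] h h_pos h_dyadic a_pos c_pos a_dyadic_iff
    by (intro representation_countsI[of z "a + halving c J"]) (simp_all add: g)
  have three_if_dyadic: "3 \<in> representation_counts z" if "a \<in> dyadic_multiples c"
    using count[of a] that a_pos a_less c_pos
    by (intro representation_countsI[of z a]) (simp_all add: g a_def)
  have "card (representations z y) \<in> {0, 1, 2, 3, 4}" for y
    using count[of y] by (simp add: g)
  hence at_most_four: "representation_counts z \<subseteq> {1, 2, 3, 4}"
    unfolding representation_counts_def by blast
  have not_four: "4 \<notin> representation_counts z" if "a \<notin> dyadic_multiples c"
  proof
    assume "4 \<in> representation_counts z"
    then obtain y where "card (representations z y) = 4"
      unfolding representation_counts_def by (metis DiffD1 rangeE)
    hence "y \<in> dyadic_multiples c" "y - a \<in> dyadic_multiples c"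
      using count[of y] g[of y] g[of "y - a"] by (auto split: if_splits)
    hence "y - (y - a) \<in> dyadic_multiples c" by (rule dyadic_multiples_diff)
    with that show False by simp
  qed
  show ?thesis
    using one two three_or_four three_if_dyadic at_most_four not_four
    unfolding a_def[symmetric] by (cases "a \<in> dyadic_multiples c") auto
qed

subsection \<open>Tail sums\<close>

lemma tail_sum_sums: "summable x \<Longrightarrow> (\<lambda>m. x (m + Suc n)) sums tail_sum x n"
  using summable_sums[OF summable_ignore_initial_segment[of x "Suc n"]] by (simp add: tail_sum_def)

lemma tail_sum_Suc: "summable x \<Longrightarrow> tail_sum x n = x (Suc n) + tail_sum x (Suc n)"
  using sums_Suc_iff[of "\<lambda>m. x (m + Suc n)"] tail_sum_sums[of x n] tail_sum_sums[of x "Suc n"]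
  by (simp add: sums_iff)

text \<open>If \<open>x n > r n\<close>, no subsum lies strictly between \<open>r n\<close> and \<open>x n\<close>: a subsum using
  some \<open>x m\<close> with \<open>m \<le> n\<close> is at least \<open>x n\<close>, any other is at most \<open>r n\<close>.\<close>

lemma interval_filling_le_tail_sum:
  assumes pos: "\<And>n. 0 < x n" and summ: "summable x" and noninc: "decseq x"
    and ifill: "interval_filling x"
  shows "x n \<le> tail_sum x n"
proof (rule ccontr)
  assume less: "\<not> x n \<le> tail_sum x n"
  have tail_nonneg: "0 \<le> tail_sum x n"
    using sums_le[OF _ sums_zero tail_sum_sums[OF summ]] pos by (simp add: less_imp_le)
  define t where "t = (tail_sum x n + x n) / 2"
  have "(\<lambda>m. m = n) \<in> representations x (x n)"
    using sums_single[of n x] by (simp add: mem_representations_iff)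
  hence "0 \<in> achievement_set x" "x n \<in> achievement_set x"
    using representations_zero[OF pos summ] by (auto simp: achievement_set_eq)
  moreover have "0 \<le> t" "t \<le> x n" using tail_nonneg less by (simp_all add: t_def)
  ultimately have "t \<in> achievement_set x"
    using ifill unfolding interval_filling_def is_interval_1 by blast
  then obtain e where e: "(\<lambda>m. if e m then x m else 0) sums t"
    by (auto simp: achievement_set_eq mem_representations_iff)
  show False
  proof (cases "\<exists>m\<le>n. e m")
    case True
    then obtain m where "m \<le> n" "e m" by blast
    hence "x m \<le> t"
      using sums_le[OF _ sums_single[of m x] e] pos by (simp add: less_imp_le)
    moreover have "x n \<le> x m" using noninc \<open>m \<le> n\<close> by (rule decseqD)
    ultimately show False using less by (simp add: t_def)
  next
    case False
    hence "(\<Sum>m<Suc n. if e m then x m else 0) = 0" by simp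
    hence shifted: "(\<lambda>m. if e (m + Suc n) then x (m + Suc n) else 0) sums t"
      using sums_iff_shift[of "\<lambda>m. if e m then x m else 0" "Suc n"] e by simp
    have "t \<le> tail_sum x n"
      by (rule sums_le[OF _ shifted tail_sum_sums[OF summ]]) (simp add: less_imp_le pos)
    thus False using less by (simp add: t_def)
  qed
qed

lemma shift_eq_halving_if_eq_tail_sum:
  assumes summ: "summable x" and exact: "\<And>n. N \<le> n \<Longrightarrow> x n = tail_sum x n"
  shows "(\<lambda>m. x (m + N)) = halving (x N)"
proof
  fix m show "x (m + N) = halving (x N) m"
  proof (induction m)
    case (Suc m)
    have "x (m + N) = x (Suc m + N) + tail_sum x (Suc m + N)"
      using exact[of "m + N"] tail_sum_Suc[OF summ, of "m + N"] by simp
    also have "\<dots> = 2 * x (Suc m + N)" using exact[of "Suc m + N"] by simp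
    finally show ?case using Suc.IH by (simp add: halving_def)
  qed (simp add: halving_def)
qed

lemma representation_counts_tail_sum_prefix:
  assumes pos: "\<And>n. 0 < x n" and summ: "summable x"
    and exact: "\<And>n. n < k \<Longrightarrow> x n = tail_sum x n"
    and fin: "\<And>y. finite (representations (\<lambda>m. x (m + k)) y)"
    and two: "2 \<in> representation_counts (\<lambda>m. x (m + k))"
  shows "representation_counts x = representation_counts (\<lambda>m. x (m + k))"
proof -
  have "representation_counts (\<lambda>m. x (m + n)) = representation_counts (\<lambda>m. x (m + k))"
    if "n \<le> k" for n
    using that
  proof (induction n rule: inc_induct)
    case (step n)
    have "(\<lambda>m. x (m + (k - Suc n) + Suc n)) = (\<lambda>m. x (m + k))"
      using step.hyps(2) by (simp add: fun_eq_iff)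
    hence fin': "finite (representations (\<lambda>m. x (Suc m + n)) y)" for y
      using finite_representations_shiftI[of "\<lambda>m. x (m + Suc n)" "k - Suc n"] fin by simp
    have "x n = (\<Sum>m. x (Suc m + n))"
      using exact[OF step.hyps(2)] by (simp add: tail_sum_def)
    hence "representation_counts (\<lambda>m. x (m + n))
        = insert 2 (representation_counts (\<lambda>m. x (Suc m + n)))"
      using representation_counts_prepend_tail_sum[of "\<lambda>m. x (m + n)", OF pos
          summable_ignore_initial_segment[OF summ] _ fin'] by simp
    also have "(\<lambda>m. x (Suc m + n)) = (\<lambda>m. x (m + Suc n))" by simp
    finally show ?case using step.IH two by (simp add: insert_absorb)
  qed simp
  from this[of 0] show ?thesis by simp
qed

theorem theorem4p9:
  fixes x :: "nat \<Rightarrow> real"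
  assumes pos: "\<And>n. x n > 0"
    and summ: "summable x"
    and noninc: "decseq x"
    and ifill: "interval_filling x"
    and unique: "\<exists>!k. tail_sum x k > x k"
  shows "cardinal_function x ` achievement_set x = {1, 2, 3}
       \<or> cardinal_function x ` achievement_set x = {1, 2, 3, 4}"
proof -
  obtain k where less: "x k < tail_sum x k" and only_k: "\<And>n. x n < tail_sum x n \<Longrightarrow> n = k"
    using unique by blast
  have exact: "x n = tail_sum x n" if "n \<noteq> k" for n
    using interval_filling_le_tail_sum[OF pos summ noninc ifill, of n] only_k[of n] that by force
  define c where "c = x (Suc k)"
  have tail: "(\<lambda>m. x (Suc m + k)) = halving c"
    using shift_eq_halving_if_eq_tail_sum[OF summ, of "Suc k"] exact by (simp add: c_def)
  have "tail_sum x k = 2 * c"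
    using tail_sum_sums[OF summ, of k] halving_sums[of c] tail by (simp add: sums_unique2)
  hence counts_k: "representation_counts (\<lambda>m. x (m + k))
      = (if x k \<in> dyadic_multiples c then {1, 2, 3, 4} else {1, 2, 3})"
    using representation_counts_prepend_halving[of c "\<lambda>m. x (m + k)"] tail pos less
    by (simp add: c_def)
  have fin_k: "finite (representations (\<lambda>m. x (m + k)) y)" for y
    using finite_representations_SucI finite_representations_halving pos tail by (simp add: c_def)
  have "representation_counts x = representation_counts (\<lambda>m. x (m + k))"
    using representation_counts_tail_sum_prefix[OF pos summ _ fin_k] exact counts_k by simp
  moreover have "finite (representations x y)" for y
    using fin_k by (rule finite_representations_shiftI)
  ultimately show ?thesis
    using cardinal_function_image_achievement_set counts_k
    by (simp add: one_enat_def numeral_eq_enat)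
qed

end
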